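(* Let $f : A \longrightarrow B$ be any derivation of the cut-free proof system for $\mathbf{NL}_{\diamond}$ described in the context (axioms, residuation rules and their inverses, monotonicity rules, and the rule-form extraction rules). Then the linear map $[\![ f ]\!] : [\![ A ]\!] \to [\![ B ]\!]$ obtained from the compact closed interpretation of $f$ coincides with the linear map $G(f) : [\![ A ]\!] \to [\![ B ]\!]$ given by the generalised Kronecker delta annotating $f$; i.e. $[\![ f ]\!] = G(f)$.
   Context: \textbf{Syntax.} Formulas of $\mathbf{NL}_{\diamond}$ are built from atoms by $A ::= p \mid \Diamond A \mid \Box A \mid A\otimes A \mid A/A \mid A\backslash A$. Derivations of arrows $A\longrightarrow B$ are built by the rules: axioms $1_A : A\longrightarrow A$; residuation: from $f:\Diamond A\to B$ infer $\triangledown f: A\to\Box B$; from $f:A\otimes B\to C$ infer $\rhd f : A\to C/B$ and $\lhd f: B\to A\backslash C$; and the inverses: from $g:A\to \Box B$ infer $\triangledown^{-1}g:\Diamond A\to B$; from $g:A\to C/B$ infer $\rhd^{-1}g: A\otimes B\to C$; from $g: B\to A\backslash C$ infer $\lhd^{-1}g : A\otimes B\to C$; monotonicity: from $f:A\to B$ infer $\Diamond f:\Diamond A\to\Diamond B$ and $\Box f:\Box A\to\Box B$; from $f:A\to B$, $g:C\to D$ infer $f\otimes g: A\otimes C\to B\otimes D$, $f/g : A/D\to B/C$, $f\backslash g: B\backslash C\to A\backslash D$; extraction rules: from $f:(\Diamond A\otimes B)\otimes C\to D$ infer $\widehat\alpha^l_\diamond f:\Diamond A\otimes(B\otimes C)\to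 D$; from $f: B\otimes(\Diamond A\otimes C)\to D$ infer $\widehat\sigma^l_\diamond f:\Diamond A\otimes(B\otimes C)\to D$; from $f: A\otimes(B\otimes\Diamond C)\to D$ infer $\widehat\alpha^r_\diamond f:(A\otimes B)\otimes\Diamond C\to D$; from $f:(A\otimes\Diamond C)\otimes B\to D$ infer $\widehat\sigma^r_\diamond f:(A\otimes B)\otimes\Diamond C\to D$. \textbf{Interpretation $[\![\cdot]\!]$.} Work in finite-dimensional real vector spaces with fixed bases, identifying $V^*$ with $V$; $\epsilon_V:V\otimes V\to\mathbb R$, $\sum v_{ij}e_i\otimes e_j\mapsto\sum_i v_{ii}$, and $\eta_V:\mathbb R\to V\otimes V$, $\lambda\mapsto\sum_i\lambda\, e_i\otimes e_i$; $\alpha$ and $\sigma$ denote the standard associativity and symmetry isomorphisms. Each atom is sent to a vector space; $[\![\Diamond A]\!]=[\![\Box A]\!]=[\![A]\!]$, $[\![A\otimes B]\!]=[\![A]\!]\otimes[\![B]\!]$, $[\![A/B]\!]=[\![A]\!]\otimes[\![B]\!]^*$, $[\![A\backslash B]\!]=[\![A]\!]^*\otimes[\![B]\!]$. On derivations: $[\![1_A]\!]=1_{[\![A]\!]}$; $[\![\triangledown f]\!]=[\![\triangledown^{-1}f]\!]=[\![\Diamond f]\!]=[\![\Box f]\!]=[\![f]\!]$; $[\![\rhd f]\!]=([\![f]\!]\otimes 1)\circ(1_{[\![A]\!]}\otimes\eta_{[\![B]\!]})$; $[\![\lhd f]\!]=(1\otimes[\![f]\!])\circ(\eta_{[\![A]\!]}\otimes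 1_{[\![B]\!]})$; $[\![\rhd^{-1}g]\!]=(1_{[\![C]\!]}\otimes\epsilon_{[\![B]\!]})\circ([\![g]\!]\otimes 1_{[\![B]\!]})$; $[\![\lhd^{-1}h]\!]=(\epsilon_{[\![A]\!]}\otimes 1_{[\![C]\!]})\circ(1_{[\![A]\!]}\otimes[\![h]\!])$; $[\![f\otimes g]\!]=[\![f]\!]\otimes[\![g]\!]$; $[\![f/g]\!]=(1_{[\![B]\!]\otimes[\![C]\!]}\otimes\epsilon_{[\![D]\!]})\circ(1_{[\![B]\!]\otimes[\![C]\!]}\otimes[\![g]\!]\otimes1_{[\![D]\!]})\circ([\![f]\!]\otimes\eta_{[\![C]\!]}\otimes 1_{[\![D]\!]})$; $[\![f\backslash g]\!]=(\epsilon_{[\![B]\!]}\otimes 1_{[\![A]\!]\otimes[\![D]\!]})\circ(1_{[\![B]\!]}\otimes[\![f]\!]\otimes 1_{[\![A]\!]\otimes[\![D]\!]})\circ(1_{[\![B]\!]}\otimes\eta_{[\![A]\!]}\otimes[\![g]\!])$; $[\![\widehat\alpha^{l}_\diamond f]\!]=[\![f]\!]\circ\alpha$, $[\![\widehat\sigma^l_\diamond f]\!]=[\![f]\!]\circ\alpha^{-1}\circ(\sigma\otimes 1)\circ\alpha$, and symmetrically for the rightward rules. \textbf{Generalised Kronecker deltas.} For index lists $I=(i_1,\dots,i_n)$, $J=(j_1,\dots,j_n)$, $\delta^I_J=1$ if $i_k=j_k$ for all $k$ and $0$ otherwise; $\delta^I_J\delta^K_L=\delta^{IK}_{JL}$ (concatenation).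 Einstein summation is used: repeated indices are summed. A delta $\delta^I_J : X_M\to Y_N$ with $I+J$ a permutation of $M+N$ denotes the linear map sending a tensor $x_M\in X$ to the tensor $y_N=\delta^I_J x_M\in Y$. \textbf{Annotation $G(f)$.} Each derivation is annotated by a delta, with each formula occurrence in its endsequent carrying an index list of length equal to the rank of its interpretation: an axiom $A_I\to A_J$ (fresh lists) is annotated $\delta^I_J$; the residuation rules, their inverses, the $\Diamond,\Box$ monotonicity rules and the four extraction rules keep the same delta, the index lists of subformula occurrences simply moving with those occurrences (e.g. from $\delta^I_J: A\otimes B\to C$ one gets $\delta^I_J: B\to A\otimes C$ for $\lhd$, with $A/B$ read as $A\otimes B$ and $A\backslash B$ as $A\otimes B$ at the level of spaces); for the binary monotonicity rules, from $\delta^I_J : A_I\to B_J$ and $\delta^K_L : C_K\to D_L$ one gets $\delta^{IK}_{JL}: A_I\otimes C_K\to B_J\otimes D_L$ for $\otimes$, $\delta^{IK}_{JL}: A_I\otimes D_L\to B_J\otimes C_K$ for $/$, and $\delta^{IK}_{JL}: B_J\otimes C_K\to A_I\otimes D_L$ for $\backslash$. $G(f)$ is the linear map $[\![A]\!]\to[\![B]\!]$ denoted by the resulting annotated delta. *)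

theory Defs
  imports Complex_Main
begin

datatype 'a fm =
    At 'a
  | Dia "'a fm"
  | Box "'a fm"
  | Ten "'a fm" "'a fm"     (* A \<otimes> B *)
  | Ovr "'a fm" "'a fm"     (* A / B *)
  | Und "'a fm" "'a fm"     (* A \ B *)

text \<open>Constructors store those formulas needed to compute the interpretation;
  the judgement derives f A B (i.e. f : A --> B) checks consistency.\<close>

datatype 'a deriv =
    Ax "'a fm"
  | Tri "'a deriv"
  | TriInv "'a deriv"
  | Rhd "'a fm" "'a fm" "'a fm" "'a deriv"
  | Lhd "'a fm" "'a fm" "'a fm" "'a deriv"
  | RhdInv "'a fm" "'a fm" "'a fm" "'a deriv"
  | LhdInv "'a fm" "'a fm" "'a fm" "'a deriv"
  | DiaM "'a deriv"
  | BoxM "'a deriv"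
  | TenM "'a fm" "'a fm" "'a fm" "'a fm" "'a deriv" "'a deriv"
  | OvrM "'a fm" "'a fm" "'a fm" "'a fm" "'a deriv" "'a deriv"
  | UndM "'a fm" "'a fm" "'a fm" "'a fm" "'a deriv" "'a deriv"
  | AlphaL "'a fm" "'a fm" "'a fm" "'a fm" "'a deriv"
  | SigmaL "'a fm" "'a fm" "'a fm" "'a fm" "'a deriv"
  | AlphaR "'a fm" "'a fm" "'a fm" "'a fm" "'a deriv"
  | SigmaR "'a fm" "'a fm" "'a fm" "'a fm" "'a deriv"

inductive derives :: "'a deriv \<Rightarrow> 'a fm \<Rightarrow> 'a fm \<Rightarrow> bool" where
  ax: "derives (Ax A) A A"
| tri: "derives f (Dia A) B \<Longrightarrow> derives (Tri f) A (Box B)"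
| tri_inv: "derives g A (Box B) \<Longrightarrow> derives (TriInv g) (Dia A) B"
| rhd: "derives f (Ten A B) C \<Longrightarrow> derives (Rhd A B C f) A (Ovr C B)"
| lhd: "derives f (Ten A B) C \<Longrightarrow> derives (Lhd A B C f) B (Und A C)"
| rhd_inv: "derives g A (Ovr C B) \<Longrightarrow> derives (RhdInv A B C g) (Ten A B) C"
| lhd_inv: "derives h B (Und A C) \<Longrightarrow> derives (LhdInv A B C h) (Ten A B) C"
| dia_m: "derives f A B \<Longrightarrow> derives (DiaM f) (Dia A) (Dia B)"
| box_m: "derives f A B \<Longrightarrow> derives (BoxM f) (Box A) (Box B)"
| ten_m: "derives f A B \<Longrightarrow> derives g C D \<Longrightarrow> derives (TenM A B C D f g) (Ten A C) (Ten B D)"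
| ovr_m: "derives f A B \<Longrightarrow> derives g C D \<Longrightarrow> derives (OvrM A B C D f g) (Ovr A D) (Ovr B C)"
| und_m: "derives f A B \<Longrightarrow> derives g C D \<Longrightarrow> derives (UndM A B C D f g) (Und B C) (Und A D)"
| alpha_l: "derives f (Ten (Ten (Dia A) B) C) D \<Longrightarrow>
            derives (AlphaL A B C D f) (Ten (Dia A) (Ten B C)) D"
| sigma_l: "derives f (Ten B (Ten (Dia A) C)) D \<Longrightarrow>
            derives (SigmaL A B C D f) (Ten (Dia A) (Ten B C)) D"
| alpha_r: "derives f (Ten A (Ten B (Dia C))) D \<Longrightarrow>
            derives (AlphaR A B C D f) (Ten (Ten A B) (Dia C)) D"
| sigma_r: "derives f (Ten (Ten A (Dia C)) B) D \<Longrightarrow>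
            derives (SigmaR A B C D f) (Ten (Ten A B) (Dia C)) D"

section \<open>Spaces: tensor products of based spaces, flattened\<close>

text \<open>A space is a tensor product of atom spaces, given by its list of dimensions
  (its shape). Basis vectors are index lists in idx s. Tensor products of spaces are
  concatenation of shapes (so the standard associativity and unit isomorphisms become
  identities on basis indices); V* is identified with V.\<close>

primrec sh :: "('a \<Rightarrow> nat) \<Rightarrow> 'a fm \<Rightarrow> nat list" where
  "sh d (At p) = [d p]"
| "sh d (Dia A) = sh d A"
| "sh d (Box A) = sh d A"
| "sh d (Ten A B) = sh d A @ sh d B"
| "sh d (Ovr A B) = sh d A @ sh d B"
| "sh d (Und A B) = sh d A @ sh d B"

primrec rank :: "'a fm \<Rightarrow> nat" where
  "rank (At p) = 1"
| "rank (Dia A) = rank A"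
| "rank (Box A) = rank A"
| "rank (Ten A B) = rank A + rank B"
| "rank (Ovr A B) = rank A + rank B"
| "rank (Und A B) = rank A + rank B"

definition idx :: "nat list \<Rightarrow> nat list set" where
  "idx s = {I. length I = length s \<and> (\<forall>k<length s. I ! k < s ! k)}"

text \<open>A linear map between such spaces is represented by its matrix:
  M I J is the coefficient of the basis vector e_J in M(e_I).\<close>

type_synonym mat = "nat list \<Rightarrow> nat list \<Rightarrow> real"

definition idm :: mat where
  "idm I J = (if I = J then 1 else 0)"

text \<open>Associativity isomorphism (and its inverse) in flattened bases.\<close>
definition alpha :: mat where
  "alpha = idm"

definition alpha_inv :: mat where
  "alpha_inv = idm"

text \<open>comp s g f = g o f, where s is the shape of the middle space.\<close>
definition comp :: "nat list \<Rightarrow> mat \<Rightarrow> mat \<Rightarrow> mat" where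
  "comp s g f = (\<lambda>I K. \<Sum>J\<in>idx s. f I J * g J K)"

text \<open>tens m n f g = f (x) g, where m, n are the ranks of domain and codomain of f.\<close>
definition tens :: "nat \<Rightarrow> nat \<Rightarrow> mat \<Rightarrow> mat \<Rightarrow> mat" where
  "tens m n f g = (\<lambda>I J. f (take m I) (take n J) * g (drop m I) (drop n J))"

text \<open>eta_V : R -> V (x) V and eps_V : V (x) V -> R for V of rank n.\<close>
definition eta :: "nat \<Rightarrow> mat" where
  "eta n = (\<lambda>I J. if I = [] \<and> take n J = drop n J then 1 else 0)"

definition eps :: "nat \<Rightarrow> mat" where
  "eps n = (\<lambda>I J. if J = [] \<and> take n I = drop n I then 1 else 0)"

text \<open>sigma m : X (x) Y -> Y (x) X, with m the rank of X.\<close>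
definition sigma :: "nat \<Rightarrow> mat" where
  "sigma m = (\<lambda>I J. if J = drop m I @ take m I then 1 else 0)"

section \<open>Compact closed interpretation of derivations\<close>

primrec interp :: "('a \<Rightarrow> nat) \<Rightarrow> 'a deriv \<Rightarrow> mat" where
  "interp d (Ax A) = idm"
| "interp d (Tri f) = interp d f"
| "interp d (TriInv f) = interp d f"
| "interp d (Rhd A B C f) =
     comp (sh d A @ sh d B @ sh d B)
       (tens (rank A + rank B) (rank C) (interp d f) idm)
       (tens (rank A) (rank A) idm (eta (rank B)))"
| "interp d (Lhd A B C f) =
     comp (sh d A @ sh d A @ sh d B)
       (tens (rank A) (rank A) idm (interp d f))
       (tens 0 (2 * rank A) (eta (rank A)) idm)"
| "interp d (RhdInv A B C g) =
     comp (sh d C @ sh d B @ sh d B)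
       (tens (rank C) (rank C) idm (eps (rank B)))
       (tens (rank A) (rank C + rank B) (interp d g) idm)"
| "interp d (LhdInv A B C h) =
     comp (sh d A @ sh d A @ sh d C)
       (tens (2 * rank A) 0 (eps (rank A)) idm)
       (tens (rank A) (rank A) idm (interp d h))"
| "interp d (DiaM f) = interp d f"
| "interp d (BoxM f) = interp d f"
| "interp d (TenM A B C D f g) = tens (rank A) (rank B) (interp d f) (interp d g)"
| "interp d (OvrM A B C D f g) =
     comp (sh d B @ sh d C @ sh d D @ sh d D)
       (tens (rank B + rank C) (rank B + rank C) idm (eps (rank D)))
       (comp (sh d B @ sh d C @ sh d C @ sh d D)
          (tens (rank B + rank C) (rank B + rank C) idm
             (tens (rank C) (rank D) (interp d g) idm))
          (tens (rank A) (rank B) (interp d f)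
             (tens 0 (2 * rank C) (eta (rank C)) idm)))"
| "interp d (UndM A B C D f g) =
     comp (sh d B @ sh d B @ sh d A @ sh d D)
       (tens (2 * rank B) 0 (eps (rank B)) idm)
       (comp (sh d B @ sh d A @ sh d A @ sh d D)
          (tens (rank B) (rank B) idm (tens (rank A) (rank B) (interp d f) idm))
          (tens (rank B) (rank B) idm (tens 0 (2 * rank A) (eta (rank A)) (interp d g))))"
| "interp d (AlphaL A B C D f) = comp (sh d A @ sh d B @ sh d C) (interp d f) alpha"
| "interp d (SigmaL A B C D f) =
     comp (sh d B @ sh d A @ sh d C) (interp d f)
       (comp (sh d B @ sh d A @ sh d C) alpha_inv
          (comp (sh d A @ sh d B @ sh d C)
             (tens (rank A + rank B) (rank B + rank A) (sigma (rank A)) idm) alpha))"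
| "interp d (AlphaR A B C D f) = comp (sh d A @ sh d B @ sh d C) (interp d f) alpha"
| "interp d (SigmaR A B C D f) =
     comp (sh d A @ sh d C @ sh d B) (interp d f)
       (comp (sh d A @ sh d C @ sh d B) alpha_inv
          (comp (sh d A @ sh d B @ sh d C)
             (tens (rank A) (rank A) idm (sigma (rank B))) alpha))"

section \<open>Generalised Kronecker delta annotation\<close>

text \<open>Index variables are lists of naturals; binary rules tag the variables of the left
  premise with 0 and of the right premise with 1, guaranteeing freshness. An annotation
  is (P, L, R): the delta's (upper, lower) index pairs P (delta^I_J = product over
  zip I J), and the index-variable lists carried by the antecedent (L) and the
  succedent (R), flattened in order of the formula occurrences.\<close>

type_synonym var = "nat list"
type_synonym annotation = "(var \<times> var) list \<times> var list \<times> var list"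

definition ren :: "nat \<Rightarrow> annotation \<Rightarrow> annotation" where
  "ren k = (\<lambda>(P, L, R). (map (\<lambda>(p, q). (k # p, k # q)) P, map ((#) k) L, map ((#) k) R))"

primrec annot :: "'a deriv \<Rightarrow> annotation" where
  "annot (Ax A) =
     (let L = map (\<lambda>k. [k]) [0..<rank A]; R = map (\<lambda>k. [k]) [rank A..<2 * rank A]
      in (zip L R, L, R))"
| "annot (Tri f) = annot f"
| "annot (TriInv f) = annot f"
| "annot (Rhd A B C f) = (case annot f of (P, L, R) \<Rightarrow> (P, take (rank A) L, R @ drop (rank A) L))"
| "annot (Lhd A B C f) = (case annot f of (P, L, R) \<Rightarrow> (P, drop (rank A) L, take (rank A) L @ R))"
| "annot (RhdInv A B C g) = (case annot g of (P, L, R) \<Rightarrow> (P, L @ drop (rank C) R, take (rank C) R))"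
| "annot (LhdInv A B C h) = (case annot h of (P, L, R) \<Rightarrow> (P, take (rank A) R @ L, drop (rank A) R))"
| "annot (DiaM f) = annot f"
| "annot (BoxM f) = annot f"
| "annot (TenM A B C D f g) =
     (case ren 0 (annot f) of (P1, I, J) \<Rightarrow> case ren 1 (annot g) of (P2, K, L) \<Rightarrow>
        (P1 @ P2, I @ K, J @ L))"
| "annot (OvrM A B C D f g) =
     (case ren 0 (annot f) of (P1, I, J) \<Rightarrow> case ren 1 (annot g) of (P2, K, L) \<Rightarrow>
        (P1 @ P2, I @ L, J @ K))"
| "annot (UndM A B C D f g) =
     (case ren 0 (annot f) of (P1, I, J) \<Rightarrow> case ren 1 (annot g) of (P2, K, L) \<Rightarrow>
        (P1 @ P2, J @ K, I @ L))"
| "annot (AlphaL A B C D f) = annot f"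
| "annot (SigmaL A B C D f) =
     (case annot f of (P, L, R) \<Rightarrow>
        (P, take (rank A) (drop (rank B) L) @ take (rank B) L @ drop (rank B + rank A) L, R))"
| "annot (AlphaR A B C D f) = annot f"
| "annot (SigmaR A B C D f) =
     (case annot f of (P, L, R) \<Rightarrow>
        (P, take (rank A) L @ drop (rank A + rank C) L @ take (rank C) (drop (rank A) L), R))"

text \<open>The linear map denoted by an annotated delta delta^P : X_M -> Y_N, x_M |-> delta x_M
  (Einstein summation): its matrix entry at input basis index I and output basis index J
  is the product of the Kronecker deltas under the assignment M := I, N := J.\<close>

definition delta_map :: "(var \<times> var) list \<Rightarrow> var list \<Rightarrow> var list \<Rightarrow> mat" where
  "delta_map P M N = (\<lambda>I J.
     let v = (\<lambda>x. the (map_of (zip M I @ zip N J) x))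
     in prod_list (map (\<lambda>(p, q). if v p = v q then 1 else 0) P))"

definition G :: "'a deriv \<Rightarrow> mat" where
  "G f = (case annot f of (P, L, R) \<Rightarrow> delta_map P L R)"

end

theory Submission
  imports Defs
begin

text \<open>Both sides are computed entry by entry on basis indices. The structural maps of the
  compact closed interpretation (identities, units, counits, symmetries, associators) all have
  Kronecker deltas as matrix entries, so summing out the intermediate indices of a composite by
  \<open>\<Sum>\<^sub>K \<delta>(X, K) F(K) = F(X)\<close>, i.e. by the yanking equations, shows that every rule
  merely permutes the indices of the interpretation of its premise, or multiplies the
  interpretations of its two premises. The annotation of a rule relabels the index variables of
  the annotation of its premises in exactly the same way. Since the index variables of an
  annotation are distinct, the delta it denotes depends only on the assignment of values to
  variables, which such a relabelling does not change; induction on the derivation concludes.\<close>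

lemma distinct_rearrange:
  "distinct xs \<Longrightarrow> set ys = set xs \<Longrightarrow> length ys = length xs \<Longrightarrow> distinct ys"
  by (metis card_distinct distinct_card)

lemma in_set_take_or_drop: "x \<in> set xs \<Longrightarrow> x \<notin> set (take n xs) \<Longrightarrow> x \<in> set (drop n xs)"
  by (metis Un_iff append_take_drop_id set_append)

lemma split_list_at_length:
  assumes "length xs = m + n"
  obtains ys zs where "xs = ys @ zs" "length ys = m" "length zs = n"
proof
  show "xs = take m xs @ drop m xs" by simp
qed (use assms in auto)

lemma map_add_comp: "(m1 ++ m2) \<circ> h = (m1 \<circ> h) ++ (m2 \<circ> h)"
  by (rule ext) (simp add: map_add_def split: option.split)

lemma idx_conv_list_all2: "idx s = {I. list_all2 (<) I s}"
  by (auto simp: idx_def list_all2_conv_all_nth)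

lemma length_idx: "I \<in> idx s \<Longrightarrow> length I = length s"
  by (simp add: idx_def)

lemma length_sh: "length (sh d A) = rank A"
  by (induct A) auto

lemma length_idx_sh: "I \<in> idx (sh d A) \<Longrightarrow> length I = rank A"
  by (simp add: idx_def length_sh)

lemma append_in_idx: "x \<in> idx s1 \<Longrightarrow> y \<in> idx s2 \<Longrightarrow> x @ y \<in> idx (s1 @ s2)"
  by (simp add: idx_conv_list_all2 list_all2_appendI)

lemma idx_append: "idx (s1 @ s2) = (\<lambda>(x, y). x @ y) ` (idx s1 \<times> idx s2)"
proof (intro equalityI subsetI)
  fix I assume "I \<in> idx (s1 @ s2)"
  then obtain x y where "I = x @ y" "x \<in> idx s1" "y \<in> idx s2"
    by (auto simp: idx_conv_list_all2 list_all2_append2)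
  then show "I \<in> (\<lambda>(x, y). x @ y) ` (idx s1 \<times> idx s2)" by auto
qed (auto simp: append_in_idx)

lemma ball_idx_append:
  "(\<forall>I\<in>idx (s1 @ s2). P I) \<longleftrightarrow> (\<forall>x\<in>idx s1. \<forall>y\<in>idx s2. P (x @ y))"
  by (auto simp: idx_append)

lemma finite_idx: "finite (idx s)"
proof (induct s)
  case Nil
  have "idx [] = {[]}" by (auto simp: idx_def)
  then show ?case by simp
next
  case (Cons n s)
  have "idx [n] = (\<lambda>k. [k]) ` {..<n}"
    by (auto simp: idx_def length_Suc_conv)
  then show ?case
    using Cons idx_append[of "[n]" s] by simp
qed

lemma sum_idx_append:
  "(\<Sum>K\<in>idx (s1 @ s2). F K) = (\<Sum>x\<in>idx s1. \<Sum>y\<in>idx s2. F (x @ y))"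
proof -
  have "inj_on (\<lambda>(x, y). x @ y) (idx s1 \<times> idx s2)"
    by (auto simp: inj_on_def length_idx)
  then show ?thesis
    by (simp add: idx_append sum.reindex sum.cartesian_product finite_idx split_def)
qed

lemma sum_idm_left: "X \<in> idx s \<Longrightarrow> (\<Sum>K\<in>idx s. idm X K * F K) = F X"
  by (simp add: idm_def finite_idx if_distrib[of "\<lambda>c. c * _"] cong: if_cong)

lemma sum_idm_right: "X \<in> idx s \<Longrightarrow> (\<Sum>K\<in>idx s. idm K X * F K) = F X"
  by (simp add: idm_def finite_idx if_distrib[of "\<lambda>c. c * _"] cong: if_cong)

lemma comp_idm_left: "J \<in> idx s \<Longrightarrow> comp s idm g I J = g I J"
  by (simp add: comp_def mult.commute[of _ "idm _ J"] sum_idm_right)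

lemma comp_idm_right: "I \<in> idx s \<Longrightarrow> comp s g idm I J = g I J"
  by (simp add: comp_def sum_idm_left)

section \<open>The interpretation of the rules on basis indices\<close>

text \<open>In each expansion below the sums are nested so that, once the sums inside it have been
  contracted, every sum has a delta as its front factor; the simplifier then contracts them from
  the inside out with \<open>sum_idm_left\<close> and \<open>sum_idm_right\<close>.\<close>

lemma interp_Rhd:
  assumes "a \<in> idx (sh d A)" "b \<in> idx (sh d B)" "c \<in> idx (sh d C)"
  shows "interp d (Rhd A B C f) a (c @ b) = interp d f (a @ b) c"
proof -
  have "interp d (Rhd A B C f) a (c @ b) = (\<Sum>x\<in>idx (sh d A). idm a x * (\<Sum>y\<in>idx (sh d B).
     \<Sum>z\<in>idx (sh d B). idm z b * (idm y z * interp d f (x @ y) c)))"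
    unfolding interp.simps comp_def sum_idx_append sum_distrib_left
    using assms by (intro sum.cong refl) (simp add: length_idx_sh tens_def eta_def idm_def)
  also have "\<dots> = interp d f (a @ b) c"
    using assms by (simp add: sum_idm_left sum_idm_right)
  finally show ?thesis .
qed

lemma interp_Lhd:
  assumes "a \<in> idx (sh d A)" "b \<in> idx (sh d B)" "c \<in> idx (sh d C)"
  shows "interp d (Lhd A B C f) b (a @ c) = interp d f (a @ b) c"
proof -
  have "interp d (Lhd A B C f) b (a @ c) = (\<Sum>x\<in>idx (sh d A). idm x a * (\<Sum>y\<in>idx (sh d A).
     idm x y * (\<Sum>z\<in>idx (sh d B). idm b z * interp d f (y @ z) c)))"
    unfolding interp.simps comp_def sum_idx_append sum_distrib_left
    using assms by (intro sum.cong refl) (simp add: length_idx_sh tens_def eta_def idm_def)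
  also have "\<dots> = interp d f (a @ b) c"
    using assms by (simp add: sum_idm_left sum_idm_right)
  finally show ?thesis .
qed

lemma interp_RhdInv:
  assumes "a \<in> idx (sh d A)" "b \<in> idx (sh d B)" "c \<in> idx (sh d C)"
  shows "interp d (RhdInv A B C g) (a @ b) c = interp d g a (c @ b)"
proof -
  have "interp d (RhdInv A B C g) (a @ b) c = (\<Sum>x\<in>idx (sh d C). idm x c * (\<Sum>y\<in>idx (sh d B).
     \<Sum>z\<in>idx (sh d B). idm b z * (idm y z * interp d g a (x @ y))))"
    unfolding interp.simps comp_def sum_idx_append sum_distrib_left
    using assms by (intro sum.cong refl) (simp add: length_idx_sh tens_def eps_def idm_def)
  also have "\<dots> = interp d g a (c @ b)"
    using assms by (simp add: sum_idm_left sum_idm_right)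
  finally show ?thesis .
qed

lemma interp_LhdInv:
  assumes "a \<in> idx (sh d A)" "b \<in> idx (sh d B)" "c \<in> idx (sh d C)"
  shows "interp d (LhdInv A B C h) (a @ b) c = interp d h b (a @ c)"
proof -
  have "interp d (LhdInv A B C h) (a @ b) c = (\<Sum>x\<in>idx (sh d A). idm a x * (\<Sum>y\<in>idx (sh d A).
     idm x y * (\<Sum>z\<in>idx (sh d C). idm z c * interp d h b (y @ z))))"
    unfolding interp.simps comp_def sum_idx_append sum_distrib_left
    using assms by (intro sum.cong refl) (simp add: length_idx_sh tens_def eps_def idm_def)
  also have "\<dots> = interp d h b (a @ c)"
    using assms by (simp add: sum_idm_left sum_idm_right)
  finally show ?thesis .
qed

lemma interp_TenM:
  assumes "a \<in> idx (sh d A)" "b \<in> idx (sh d B)"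
  shows "interp d (TenM A B C D f g) (a @ c) (b @ e) = interp d f a b * interp d g c e"
  using assms by (simp add: length_idx_sh tens_def)

lemma interp_OvrM:
  assumes "a \<in> idx (sh d A)" "b \<in> idx (sh d B)" "c \<in> idx (sh d C)" "e \<in> idx (sh d D)"
  shows "interp d (OvrM A B C D f g) (a @ e) (b @ c) = interp d f a b * interp d g c e"
proof -
  have "interp d (OvrM A B C D f g) (a @ e) (b @ c) =
    (\<Sum>y1\<in>idx (sh d B). idm y1 b * (\<Sum>y2\<in>idx (sh d C). idm y2 c * (\<Sum>y3\<in>idx (sh d D).
     \<Sum>y4\<in>idx (sh d D). \<Sum>x1\<in>idx (sh d B). idm x1 y1 * (\<Sum>x2\<in>idx (sh d C). idm x2 y2 *
     (\<Sum>x3\<in>idx (sh d C). idm x2 x3 * (\<Sum>x4\<in>idx (sh d D). idm x4 y4 *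
     (idm e x4 * (idm y3 y4 * (interp d f a x1 * interp d g x3 y3)))))))))"
    unfolding interp.simps comp_def sum_idx_append sum_distrib_left sum_distrib_right
    using assms by (intro sum.cong refl) (simp add: length_idx_sh tens_def eta_def eps_def idm_def)
  also have "\<dots> = interp d f a b * interp d g c e"
    using assms by (simp add: sum_idm_left sum_idm_right)
  finally show ?thesis .
qed

lemma interp_UndM:
  assumes "a \<in> idx (sh d A)" "b \<in> idx (sh d B)" "c \<in> idx (sh d C)" "e \<in> idx (sh d D)"
  shows "interp d (UndM A B C D f g) (b @ c) (a @ e) = interp d f a b * interp d g c e"
proof -
  have "interp d (UndM A B C D f g) (b @ c) (a @ e) =
    (\<Sum>y1\<in>idx (sh d B). \<Sum>y2\<in>idx (sh d B). \<Sum>y3\<in>idx (sh d A). \<Sum>y4\<in>idx (sh d D).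
     \<Sum>x1\<in>idx (sh d B). idm x1 y1 * (idm y4 e * (idm y3 a * (idm y1 y2 * (idm b x1 *
     (\<Sum>x2\<in>idx (sh d A). \<Sum>x3\<in>idx (sh d A). idm x2 x3 * (idm x3 y3 *
     (\<Sum>x4\<in>idx (sh d D). idm x4 y4 * (interp d f x2 y2 * interp d g c x4)))))))))"
    unfolding interp.simps comp_def sum_idx_append sum_distrib_left sum_distrib_right
    using assms by (intro sum.cong refl) (simp add: length_idx_sh tens_def eta_def eps_def idm_def)
  also have "\<dots> = interp d f a b * interp d g c e"
    using assms by (simp add: sum_idm_left sum_idm_right)
  finally show ?thesis .
qed

lemma interp_SigmaL:
  assumes "a \<in> idx (sh d A)" "b \<in> idx (sh d B)" "c \<in> idx (sh d C)"
  shows "interp d (SigmaL A B C D f) (a @ b @ c) J = interp d f (b @ a @ c) J"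
proof -
  have "interp d (SigmaL A B C D f) (a @ b @ c) J = (\<Sum>y\<in>idx (sh d B). idm b y *
     (\<Sum>x\<in>idx (sh d A). idm a x * (\<Sum>z\<in>idx (sh d C). idm c z * interp d f (y @ x @ z) J)))"
    unfolding interp.simps alpha_def alpha_inv_def comp_def[of _ "interp d f"] sum_idx_append
      sum_distrib_left
    using assms by (intro sum.cong refl)
      (simp add: append_in_idx comp_idm_left comp_idm_right length_idx_sh tens_def sigma_def idm_def)
  also have "\<dots> = interp d f (b @ a @ c) J"
    using assms by (simp add: sum_idm_left)
  finally show ?thesis .
qed

lemma interp_SigmaR:
  assumes "a \<in> idx (sh d A)" "b \<in> idx (sh d B)" "c \<in> idx (sh d C)"
  shows "interp d (SigmaR A B C D f) (a @ b @ c) J = interp d f (a @ c @ b) J"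
proof -
  have "interp d (SigmaR A B C D f) (a @ b @ c) J = (\<Sum>x\<in>idx (sh d A). idm a x *
     (\<Sum>y\<in>idx (sh d C). idm c y * (\<Sum>z\<in>idx (sh d B). idm b z * interp d f (x @ y @ z) J)))"
    unfolding interp.simps alpha_def alpha_inv_def comp_def[of _ "interp d f"] sum_idx_append
      sum_distrib_left
    using assms by (intro sum.cong refl)
      (simp add: append_in_idx comp_idm_left comp_idm_right length_idx_sh tens_def sigma_def idm_def)
  also have "\<dots> = interp d f (a @ c @ b) J"
    using assms by (simp add: sum_idm_left)
  finally show ?thesis .
qed

lemmas interp_rules = interp_Rhd interp_Lhd interp_RhdInv interp_LhdInv
  interp_TenM interp_OvrM interp_UndM interp_SigmaL interp_SigmaR

section \<open>Freshness of annotations\<close>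

lemma annot_wf:
  assumes "derives f A B" "annot f = (P, L, R)"
  shows "length L = rank A \<and> length R = rank B \<and> distinct (L @ R)"
  using assms
proof (induction arbitrary: P L R rule: derives.induct)
  case (rhd f A B C)
  then show ?case
    by (cases "annot f") (clarsimp simp del: distinct_append,
        erule distinct_rearrange; auto intro: in_set_take_or_drop dest: in_set_takeD in_set_dropD)
next
  case (lhd f A B C)
  then show ?case
    by (cases "annot f") (clarsimp simp del: distinct_append,
        erule distinct_rearrange; auto intro: in_set_take_or_drop dest: in_set_takeD in_set_dropD)
next
  case (rhd_inv g A C B)
  then show ?case
    by (cases "annot g") (clarsimp simp del: distinct_append,
        erule distinct_rearrange; auto intro: in_set_take_or_drop dest: in_set_takeD in_set_dropD)
next
  case (lhd_inv h B A C)
  then show ?case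
    by (cases "annot h") (clarsimp simp del: distinct_append,
        erule distinct_rearrange; auto intro: in_set_take_or_drop dest: in_set_takeD in_set_dropD)
next
  case (sigma_l f B A C D)
  then show ?case
    by (cases "annot f") (clarsimp simp del: distinct_append, erule distinct_rearrange;
        auto intro: in_set_take_or_drop dest: in_set_takeD in_set_dropD simp del: drop_drop
          simp flip: drop_drop[of "rank A" "rank B", unfolded add.commute[of "rank A"]])
next
  case (sigma_r f A C B D)
  then show ?case
    by (cases "annot f") (clarsimp simp del: distinct_append, erule distinct_rearrange;
        auto intro: in_set_take_or_drop dest: in_set_takeD in_set_dropD simp del: drop_drop
          simp flip: drop_drop[of "rank C" "rank A", unfolded add.commute[of "rank C"]])
qed (fastforce simp: Let_def ren_def distinct_map inj_on_def split: prod.splits)+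

section \<open>Delta maps as functions of a valuation\<close>

definition valuation :: "var list \<Rightarrow> nat list \<Rightarrow> var \<Rightarrow> nat" where
  "valuation xs ns = the \<circ> map_of (zip xs ns)"

definition delta_value :: "(var \<times> var) list \<Rightarrow> (var \<Rightarrow> nat) \<Rightarrow> real" where
  "delta_value P v = (\<Prod>(p, q)\<leftarrow>P. if v p = v q then 1 else 0)"

lemma delta_map_valuation:
  "length M = length I \<Longrightarrow> delta_map P M N I J = delta_value P (valuation (M @ N) (I @ J))"
  by (simp add: delta_map_def delta_value_def valuation_def zip_append comp_def)

lemma delta_value_append: "delta_value (P @ Q) v = delta_value P v * delta_value Q v"
  by (simp add: delta_value_def)

lemma delta_value_tag:
  "delta_value (map (\<lambda>(p, q). (k # p, k # q)) P) v = delta_value P (v \<circ> (#) k)"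
  by (induct P) (auto simp: delta_value_def)

lemma valuation_eqI:
  assumes "distinct xs" "length xs = length ns" "length ys = length js" "length ys = length xs"
    and "set (zip ys js) = set (zip xs ns)"
  shows "valuation ys js = valuation xs ns"
proof -
  have "set ys = set xs"
    using assms(2-5) by (metis map_fst_zip set_map)
  then have "distinct ys"
    by (rule distinct_rearrange[OF assms(1) _ assms(4)])
  then have "map_of (zip ys js) = map_of (zip xs ns)"
    using assms by (simp add: map_of_inject_set)
  then show ?thesis
    by (simp add: valuation_def)
qed

lemma delta_map_rearrange:
  assumes "distinct (M @ N)" "length M = length I" "length N = length J"
    and "length M' = length I'" "length N' = length J'" "length (M' @ N') = length (M @ N)"
    and "set (zip M' I' @ zip N' J') = set (zip M I @ zip N J)"
  shows "delta_map P M' N' I' J' = delta_map P M N I J"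
  using valuation_eqI[of "M @ N" "I @ J" "M' @ N'" "I' @ J'"] assms
  by (simp add: delta_map_valuation zip_append)

lemma delta_value_eq_if:
  "delta_value P v = (if \<forall>(p, q)\<in>set P. v p = v q then 1 else 0)"
  by (induct P) (auto simp: delta_value_def)

lemma delta_value_zip_idm:
  assumes "distinct (M @ N)" "length M = length I" "length N = length J" "length M = length N"
  shows "delta_value (zip M N) (valuation (M @ N) (I @ J)) = idm I J"
proof -
  let ?v = "valuation (M @ N) (I @ J)"
  have v: "?v (M ! k) = I ! k" "?v (N ! k) = J ! k" if "k < length M" for k
    using that assms map_of_zip_nth[of "M @ N" "I @ J" k]
      map_of_zip_nth[of "M @ N" "I @ J" "length M + k"]
    by (simp_all add: valuation_def nth_append)
  have "(\<forall>(p, q)\<in>set (zip M N). ?v p = ?v q) \<longleftrightarrow> (\<forall>k<length M. I ! k = J ! k)"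
    using v assms(4) by (fastforce simp: set_zip)
  also have "\<dots> \<longleftrightarrow> I = J"
    using assms(2-4) by (simp add: list_eq_iff_nth_eq)
  finally show ?thesis
    by (simp add: delta_value_eq_if idm_def)
qed

lemma map_of_zip_tag:
  "map_of (zip (map ((#) k) xs) ns) \<circ> (#) k' = (if k' = k then map_of (zip xs ns) else Map.empty)"
  by (induct xs arbitrary: ns) (auto simp: zip_Cons1 fun_eq_iff split: list.split)

section \<open>The delta maps of the rules\<close>

lemma G_Ax:
  assumes "length I = rank A" "length J = rank A"
  shows "G (Ax A) I J = idm I J"
proof -
  let ?L = "map (\<lambda>k. [k]) [0..<rank A]" and ?R = "map (\<lambda>k. [k]) [rank A..<2 * rank A]"
  have "distinct (?L @ ?R)"
    by (auto simp: distinct_map inj_on_def)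
  then show ?thesis
    using assms delta_value_zip_idm[of ?L ?R I J] by (simp add: G_def Let_def delta_map_valuation)
qed

lemma G_same_delta:
  "G (Tri f) = G f" "G (TriInv f) = G f" "G (DiaM f) = G f" "G (BoxM f) = G f"
  "G (AlphaL A B C D f) = G f" "G (AlphaR A B C D f) = G f"
  by (simp_all add: G_def)

lemma G_Rhd:
  assumes "derives f (Ten A B) C" "length a = rank A" "length b = rank B" "length c = rank C"
  shows "G (Rhd A B C f) a (c @ b) = G f (a @ b) c"
proof -
  obtain P L R where an: "annot f = (P, L, R)" by (cases "annot f")
  note wf = annot_wf[OF assms(1) an]
  then obtain La Lb where "L = La @ Lb" "length La = rank A" "length Lb = rank B"
    by (auto elim: split_list_at_length)
  then show ?thesis
    unfolding G_def using an wf assms(2-)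
    by simp (rule delta_map_rearrange; auto simp: zip_append)
qed

lemma G_Lhd:
  assumes "derives f (Ten A B) C" "length a = rank A" "length b = rank B" "length c = rank C"
  shows "G (Lhd A B C f) b (a @ c) = G f (a @ b) c"
proof -
  obtain P L R where an: "annot f = (P, L, R)" by (cases "annot f")
  note wf = annot_wf[OF assms(1) an]
  then obtain La Lb where "L = La @ Lb" "length La = rank A" "length Lb = rank B"
    by (auto elim: split_list_at_length)
  then show ?thesis
    unfolding G_def using an wf assms(2-)
    by simp (rule delta_map_rearrange; auto simp: zip_append)
qed

lemma G_RhdInv:
  assumes "derives g A (Ovr C B)" "length a = rank A" "length b = rank B" "length c = rank C"
  shows "G (RhdInv A B C g) (a @ b) c = G g a (c @ b)"
proof -
  obtain P L R where an: "annot g = (P, L, R)" by (cases "annot g")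
  note wf = annot_wf[OF assms(1) an]
  then obtain Rc Rb where "R = Rc @ Rb" "length Rc = rank C" "length Rb = rank B"
    by (auto elim: split_list_at_length)
  then show ?thesis
    unfolding G_def using an wf assms(2-)
    by simp (rule delta_map_rearrange; auto simp: zip_append)
qed

lemma G_LhdInv:
  assumes "derives h B (Und A C)" "length a = rank A" "length b = rank B" "length c = rank C"
  shows "G (LhdInv A B C h) (a @ b) c = G h b (a @ c)"
proof -
  obtain P L R where an: "annot h = (P, L, R)" by (cases "annot h")
  note wf = annot_wf[OF assms(1) an]
  then obtain Ra Rc where "R = Ra @ Rc" "length Ra = rank A" "length Rc = rank C"
    by (auto elim: split_list_at_length)
  then show ?thesis
    unfolding G_def using an wf assms(2-)
    by simp (rule delta_map_rearrange; auto simp: zip_append)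
qed

lemma G_SigmaL:
  assumes "derives f (Ten B (Ten (Dia A) C)) D"
    and "length a = rank A" "length b = rank B" "length c = rank C" "length J = rank D"
  shows "G (SigmaL A B C D f) (a @ b @ c) J = G f (b @ a @ c) J"
proof -
  obtain P L R where an: "annot f = (P, L, R)" by (cases "annot f")
  note wf = annot_wf[OF assms(1) an]
  then obtain Lb L' where "L = Lb @ L'" "length Lb = rank B" "length L' = rank A + rank C"
    by (auto simp: add.assoc elim: split_list_at_length)
  moreover from this obtain La Lc where "L' = La @ Lc" "length La = rank A" "length Lc = rank C"
    by (auto elim: split_list_at_length)
  ultimately show ?thesis
    unfolding G_def using an wf assms(2-)
    by simp (rule delta_map_rearrange; auto simp: zip_append)
qed

lemma G_SigmaR:
  assumes "derives f (Ten (Ten A (Dia C)) B) D"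
    and "length a = rank A" "length b = rank B" "length c = rank C" "length J = rank D"
  shows "G (SigmaR A B C D f) (a @ b @ c) J = G f (a @ c @ b) J"
proof -
  obtain P L R where an: "annot f = (P, L, R)" by (cases "annot f")
  note wf = annot_wf[OF assms(1) an]
  then obtain La L' where "L = La @ L'" "length La = rank A" "length L' = rank C + rank B"
    by (auto simp: add.assoc elim: split_list_at_length)
  moreover from this obtain Lc Lb where "L' = Lc @ Lb" "length Lc = rank C" "length Lb = rank B"
    by (auto elim: split_list_at_length)
  ultimately show ?thesis
    unfolding G_def using an wf assms(2-)
    by simp (rule delta_map_rearrange; auto simp: zip_append)
qed

lemma G_TenM:
  assumes "derives f A B" "derives g C D"
    and "length a = rank A" "length b = rank B" "length c = rank C" "length e = rank D"
  shows "G (TenM A B C D f g) (a @ c) (b @ e) = G f a b * G g c e"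
proof -
  obtain P1 L1 R1 where f: "annot f = (P1, L1, R1)" by (cases "annot f")
  obtain P2 L2 R2 where g: "annot g = (P2, L2, R2)" by (cases "annot g")
  let ?v = "valuation ((map ((#) 0) L1 @ map ((#) 1) L2) @ map ((#) 0) R1 @ map ((#) 1) R2)
    ((a @ c) @ b @ e)"
  have len: "length L1 = length a" "length R1 = length b" "length L2 = length c" "length R2 = length e"
    using annot_wf[OF assms(1) f] annot_wf[OF assms(2) g] assms(3-) by auto
  then have "?v \<circ> (#) 0 = valuation (L1 @ R1) (a @ b)" "?v \<circ> (#) 1 = valuation (L2 @ R2) (c @ e)"
    by (simp_all add: valuation_def comp_assoc zip_append map_of_append map_add_comp map_of_zip_tag)
  then show ?thesis
    using f g len by (simp add: G_def ren_def delta_map_valuation delta_value_append delta_value_tag)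
qed

lemma G_OvrM:
  assumes "derives f A B" "derives g C D"
    and "length a = rank A" "length b = rank B" "length c = rank C" "length e = rank D"
  shows "G (OvrM A B C D f g) (a @ e) (b @ c) = G f a b * G g c e"
proof -
  obtain P1 L1 R1 where f: "annot f = (P1, L1, R1)" by (cases "annot f")
  obtain P2 L2 R2 where g: "annot g = (P2, L2, R2)" by (cases "annot g")
  have "G (OvrM A B C D f g) (a @ e) (b @ c) = G (TenM A B C D f g) (a @ c) (b @ e)"
    unfolding G_def using f g annot_wf[OF assms(1) f] annot_wf[OF assms(2) g] assms(3-)
    by (simp add: ren_def) (rule delta_map_rearrange; auto simp: distinct_map inj_on_def zip_append)
  also have "\<dots> = G f a b * G g c e"
    using assms by (rule G_TenM)
  finally show ?thesis .
qed

lemma G_UndM: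
  assumes "derives f A B" "derives g C D"
    and "length a = rank A" "length b = rank B" "length c = rank C" "length e = rank D"
  shows "G (UndM A B C D f g) (b @ c) (a @ e) = G f a b * G g c e"
proof -
  obtain P1 L1 R1 where f: "annot f = (P1, L1, R1)" by (cases "annot f")
  obtain P2 L2 R2 where g: "annot g = (P2, L2, R2)" by (cases "annot g")
  have "G (UndM A B C D f g) (b @ c) (a @ e) = G (TenM A B C D f g) (a @ c) (b @ e)"
    unfolding G_def using f g annot_wf[OF assms(1) f] annot_wf[OF assms(2) g] assms(3-)
    by (simp add: ren_def) (rule delta_map_rearrange; auto simp: distinct_map inj_on_def zip_append)
  also have "\<dots> = G f a b * G g c e"
    using assms by (rule G_TenM)
  finally show ?thesis .
qed

lemmas G_rules = G_Ax G_same_delta G_Rhd G_Lhd G_RhdInv G_LhdInv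
  G_TenM G_OvrM G_UndM G_SigmaL G_SigmaR

theorem mainTheorem1:
  fixes d :: "'a \<Rightarrow> nat" and f :: "'a deriv" and A B :: "'a fm"
  assumes "derives f A B"
  shows "\<forall>I\<in>idx (sh d A). \<forall>J\<in>idx (sh d B). interp d f I J = G f I J"
  using assms
  (* the deleted defining equations of interp are the ones superseded by interp_rules *)
  by (induction rule: derives.induct)
    (simp_all del: interp.simps(4-7,10-12,14,16) add: interp_rules G_rules alpha_def comp_idm_right
      ball_idx_append append_in_idx length_idx_sh)

end
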